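(* Let $k\in\mathbb C$ with $\Re(k)>0$, let $f:\mathbb Q\to\mathbb C$ be $1$-periodic, and let $h:\mathbb R\setminus\{0\}\to\mathbb C$ satisfy $h(x)=f(x)-|x|^{-k}f(-1/x)$ for $x\in\mathbb Q\setminus\{0\}$ and $h(x)=O(|x|^{-\Re(k)})$ for $0<|x|\leq1$. Then the function $$f^\ast(x):=\begin{cases} q^{-k}f(\overline{x}) & x=\tfrac aq\in\mathbb Q,\\ \lim_{\mathbb Q\ni y=\frac aq\to x}q^{-k}f(\overline{y}) & x\notin\mathbb Q\end{cases}$$ is well defined and is a continuous function of $x\in\mathbb R\setminus\mathbb Q$. Furthermore, if $h(x)=o(|x|^{-\Re(k)})$ as $x\to0$, then $f^\ast$ is continuous on $\mathbb R$. Finally, there exists a set $X\subset\mathbb R$ of full Lebesgue measure such that $f^\ast$ is $\alpha$-Hölder continuous at every point of $X$, for every $\alpha<\frac12\Re(k)$. In particular, if $\Re(k)>2$, then $f^\ast$ has derivative zero almost everywhere.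
   Context: For a rational $x=a/q$ in reduced form with $q\ge1$, $\overline{x}:=\overline{a}_q/q$ where $\overline a_q\in(0,q]$ is the integer with $a\overline a_q\equiv1\pmod q$. In the limit, $y=a/q$ is written in reduced form. *)

theory Defs
  imports "HOL-Analysis.Analysis" "HOL-Number_Theory.Cong"
begin

text \<open>Reduced form of a rational: quotient_of y = (a, q) with q > 0, coprime a q.\<close>
definition rnum :: "rat \<Rightarrow> int" where "rnum y = fst (quotient_of y)"
definition rden :: "rat \<Rightarrow> int" where "rden y = snd (quotient_of y)"

definition inv_rep :: "int \<Rightarrow> int \<Rightarrow> int" where
  "inv_rep a q = (THE b. 0 < b \<and> b \<le> q \<and> [a * b = 1] (mod q))"

text \<open>overline x = abar_q / q for x = a/q in reduced form.\<close>
definition rat_bar :: "rat \<Rightarrow> rat" where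
  "rat_bar y = of_int (inv_rep (rnum y) (rden y)) / of_int (rden y)"

definition fstar_rat :: "complex \<Rightarrow> (rat \<Rightarrow> complex) \<Rightarrow> real \<Rightarrow> complex" where
  "fstar_rat k f x =
     (if x \<in> \<rat> then
        (let y = (THE r. of_rat r = x) in (of_int (rden y) :: complex) powr (-k) * f (rat_bar y))
      else 0)"

definition fstar :: "complex \<Rightarrow> (rat \<Rightarrow> complex) \<Rightarrow> real \<Rightarrow> complex" where
  "fstar k f x = (if x \<in> \<rat> then fstar_rat k f x else Lim (at x within \<rat>) (fstar_rat k f))"

end

theory Submission
  imports Defs
begin

text \<open>For Farey neighbours \<open>a/q\<close> and \<open>p/r\<close> the relation defining \<open>h\<close> gives
  \<open>f*(a/q) - f*(p/r) = q^(-k) h(\<plusminus>r/q)\<close>, which is \<open>O(r^(-\<sigma>))\<close> with \<open>\<sigma> = Re k\<close>.  Walking down the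
  Stern-Brocot tree these bounds decay geometrically, so on the rationals of a Farey interval
  with denominators \<open>q1 \<le> q2\<close> the function \<open>f*\<close> stays within \<open>O(q1^(-\<sigma>) + q2^(-\<sigma>))\<close> of its
  value at an endpoint.  An irrational \<open>x\<close> lies in such intervals with arbitrarily large
  denominators, which gives the limit \<open>f*(x)\<close> and continuity at \<open>x\<close>.  At a rational the same
  estimate, applied to its neighbours of large denominator, gives continuity once
  \<open>h = o(|x|^(-\<sigma>))\<close>.

  For Hoelder continuity at \<open>x\<close>, a nearby \<open>y\<close> is separated from \<open>x\<close> inside the last Farey
  interval containing both, with denominators \<open>Q1 \<le> Q2\<close>, so that
  \<open>|f*(y) - f*(x)| = O(Q1^(-\<sigma>))\<close>.  Off a null set (Borel-Cantelli) \<open>x\<close> has irrationality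
  exponent at most \<open>2 + \<tau>\<close> for every \<open>\<tau> > 0\<close>, and then \<open>|y - x| \<ge> c Q1^(-(1+\<tau>)(2+\<tau>))\<close>; this
  gives every exponent below \<open>\<sigma>/2\<close>.  For \<open>\<sigma> > 2\<close> such an exponent exceeds \<open>1\<close>, which forces
  the derivative to vanish.\<close>

section \<open>Reduced fractions and Farey pairs\<close>

lemma quotient_of_int_div:
  assumes "0 < q" "coprime a q"
  shows "quotient_of (of_int a / of_int q) = (a, q)"
  using assms by (simp add: Fract_of_int_quotient [symmetric] quotient_of_Fract normalize_def)

lemma rnum_rden_int_div:
  assumes "0 < q" "coprime a q"
  shows "rnum (of_int a / of_int q) = a" "rden (of_int a / of_int q) = q"
  using quotient_of_int_div [OF assms] by (simp_all add: rnum_def rden_def)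

lemma cong_inverse_imp_coprime:
  fixes a b q :: int
  assumes "[a * b = 1] (mod q)"
  shows "coprime a q"
proof -
  have "coprime (a * b) q"
    using cong_imp_coprime [OF cong_sym [OF assms]] by simp
  then show ?thesis by simp
qed

lemma inv_rep_cong:
  fixes a b q :: int
  assumes q: "0 < q" and inv: "[a * b = 1] (mod q)"
  shows "[inv_rep a q = b] (mod q)"
proof -
  define b0 where "b0 = (b - 1) mod q + 1"
  have b0_range: "0 < b0" "b0 \<le> q"
    using pos_mod_sign [of q "b - 1"] pos_mod_bound [of q "b - 1"] q unfolding b0_def by linarith+
  have b0_b: "[b0 = b] (mod q)"
    unfolding b0_def cong_def by (simp add: mod_add_left_eq)
  have b0_inv: "[a * b0 = 1] (mod q)"
    using cong_trans [OF cong_scalar_left [OF b0_b] inv] .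
  have "inv_rep a q = b0"
    unfolding inv_rep_def
  proof (rule the_equality)
    show "0 < b0 \<and> b0 \<le> q \<and> [a * b0 = 1] (mod q)"
      using b0_range b0_inv by simp
  next
    fix c assume c: "0 < c \<and> c \<le> q \<and> [a * c = 1] (mod q)"
    then have "[a * c = a * b0] (mod q)"
      using cong_trans [OF _ cong_sym [OF b0_inv]] by blast
    then have "[c - 1 = b0 - 1] (mod q)"
      using cong_mult_lcancel [OF cong_inverse_imp_coprime [OF inv]] by (simp add: cong_diff)
    then have "(c - 1) mod q = (b0 - 1) mod q"
      by (simp add: cong_def)
    then show "c = b0"
      using c b0_range by simp
  qed
  with b0_b show ?thesis by simp
qed

lemma periodic_int_shift:
  fixes f :: "'a::ring_1 \<Rightarrow> 'b"
  assumes per: "\<And>x. f (x + 1) = f x"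
  shows "f (x + of_int n) = f x"
proof (induction n rule: int_induct [where k = 0])
  case (step1 i)
  then show ?case using per [of "x + of_int i"] by (simp add: add.assoc)
next
  case (step2 i)
  then show ?case using per [of "x + of_int (i - 1)"] by (simp add: algebra_simps)
qed simp

lemma fstar_rat_of_rat:
  "fstar_rat k f (of_rat r) = of_int (rden r) powr (-k) * f (rat_bar r)"
proof -
  have "(THE s. (of_rat s :: real) = of_rat r) = r"
    by (rule the_equality) auto
  then show ?thesis by (simp add: fstar_rat_def Let_def)
qed

definition fstar_frac :: "complex \<Rightarrow> (rat \<Rightarrow> complex) \<Rightarrow> int \<Rightarrow> int \<Rightarrow> complex" where
  "fstar_frac k f a q = fstar_rat k f (of_int a / of_int q)"

lemma fstar_frac_scale: "c \<noteq> 0 \<Longrightarrow> fstar_frac k f (c * a) (c * q) = fstar_frac k f a q"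
  by (simp add: fstar_frac_def)

lemma fstar_frac_eq_inverse:
  assumes per: "\<And>x. f (x + 1) = f x" and q: "0 < q" and inv: "[a * b = 1] (mod q)"
  shows "fstar_frac k f a q = of_int q powr (-k) * f (of_int b / of_int q)"
proof -
  note num_den = rnum_rden_int_div [OF q cong_inverse_imp_coprime [OF inv]]
  obtain t where t: "inv_rep a q = b + q * t"
    using cong_iff_lin [THEN iffD1, OF cong_sym [OF inv_rep_cong [OF q inv]]] by blast
  have "rat_bar (of_int a / of_int q) = of_int b / of_int q + of_int t"
    using q by (simp add: rat_bar_def num_den t field_simps)
  then have "f (rat_bar (of_int a / of_int q)) = f (of_int b / of_int q)"
    by (simp add: periodic_int_shift [where f = f, OF per])
  moreover have "real_of_int a / real_of_int q = of_rat (of_int a / of_int q)"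
    by (simp add: of_rat_divide)
  ultimately show ?thesis
    by (simp add: fstar_frac_def fstar_rat_of_rat num_den)
qed

definition farey_pair :: "int \<Rightarrow> int \<Rightarrow> int \<Rightarrow> int \<Rightarrow> bool" where
  "farey_pair p1 q1 p2 q2 \<longleftrightarrow> 1 \<le> q1 \<and> q1 \<le> q2 \<and> \<bar>p1 * q2 - p2 * q1\<bar> = 1"

lemma farey_pair_child:
  assumes "farey_pair p1 q1 p2 q2" "0 \<le> i"
  shows "farey_pair (i * p1 + p2) (i * q1 + q2) ((i + 1) * p1 + p2) ((i + 1) * q1 + q2)"
    and "q2 \<le> i * q1 + q2"
proof -
  have "(i * p1 + p2) * ((i + 1) * q1 + q2) - ((i + 1) * p1 + p2) * (i * q1 + q2) = - (p1 * q2 - p2 * q1)"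
    by (simp add: algebra_simps)
  moreover have "0 \<le> i * q1"
    using assms by (simp add: farey_pair_def)
  ultimately show "farey_pair (i * p1 + p2) (i * q1 + q2) ((i + 1) * p1 + p2) ((i + 1) * q1 + q2)"
    and "q2 \<le> i * q1 + q2"
    using assms(1) by (simp_all add: farey_pair_def algebra_simps abs_minus_commute)
qed

text \<open>One Euclidean step on the weights: the mediant with weights \<open>(m, n)\<close> of \<open>p1/q1\<close> and
  \<open>p2/q2\<close> is the mediant with weights \<open>(n - m mod n, m mod n)\<close> of the child pair with index
  \<open>i = m div n\<close>, and the total weight drops from \<open>m + n\<close> to \<open>n\<close>.\<close>
lemma mediant_weights_split:
  fixes m n :: int
  assumes "0 \<le> m" "0 < n"
  obtains i n' m' where "0 \<le> i" "0 < n'" "0 \<le> m'" "n' + m' = n"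
    "\<And>x y. m * x + n * y = n' * (i * x + y) + m' * ((i + 1) * x + y)"
proof -
  define i r where "i = m div n" and "r = m mod n"
  have m: "m = n * i + r"
    by (simp add: i_def r_def)
  have "m * x + n * y = (n - r) * (i * x + y) + r * ((i + 1) * x + y)" for x y
    unfolding m by (simp add: algebra_simps)
  moreover have "0 \<le> i" "0 < n - r" "0 \<le> r"
    using assms by (simp_all add: i_def r_def pos_imp_zdiv_nonneg_iff)
  ultimately show thesis
    using that [of i "n - r" r] by simp
qed

section \<open>Values at Farey neighbours and mediants\<close>

locale quantum_modular =
  fixes k :: complex and f :: "rat \<Rightarrow> complex" and h :: "real \<Rightarrow> complex" and C :: real
  assumes k_pos: "Re k > 0"
    and f_per: "\<And>x. f (x + 1) = f x"
    and h_eq: "\<And>x::rat. x \<noteq> 0 \<Longrightarrow>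
       h (of_rat x) = f x - (of_real \<bar>of_rat x\<bar> :: complex) powr (-k) * f (- 1 / x)"
    and h_bound: "\<And>x::real. 0 < \<bar>x\<bar> \<Longrightarrow> \<bar>x\<bar> \<le> 1 \<Longrightarrow> cmod (h x) \<le> C * \<bar>x\<bar> powr (- Re k)"
begin

lemma C_nonneg: "0 \<le> C"
proof -
  have "cmod (h 1) \<le> C"
    using h_bound [of 1] by simp
  then show ?thesis
    using norm_ge_zero [of "h 1"] by linarith
qed

text \<open>The inverses of \<open>a\<close> mod \<open>q\<close> and of \<open>p\<close> mod \<open>r\<close> are \<open>e r\<close> and \<open>-e q\<close>, so the two
  values are \<open>q^(-k) f(e r/q)\<close> and \<open>r^(-k) f(-1/(e r/q))\<close>, and the relation defining \<open>h\<close>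
  applies.\<close>
lemma fstar_frac_neighbour_diff:
  assumes q: "0 < q" and r: "0 < r" and e: "\<bar>e\<bar> = 1" and det: "a * r - p * q = e"
  shows "fstar_frac k f a q - fstar_frac k f p r
           = of_int q powr (-k) * h (of_int e * of_int r / of_int q)"
proof -
  have e_cases: "e = 1 \<or> e = -1"
    using e by auto
  have ar: "a * r = p * q + e"
    using det by simp
  have ee: "e * e = 1"
    using e_cases by auto
  have "a * (e * r) - 1 = e * (a * r) - e * e"
    using ee by (simp add: algebra_simps)
  also have "\<dots> = q * (e * p)"
    unfolding ar by (simp add: algebra_simps)
  finally have inv_q: "[a * (e * r) = 1] (mod q)"
    by (simp add: cong_iff_dvd_diff)
  have "p * (- (e * q)) - 1 = - (e * (p * q + e))"
    using ee by (simp add: algebra_simps)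
  also have "\<dots> = r * (- (e * a))"
    unfolding ar [symmetric] by (simp add: algebra_simps)
  finally have inv_r: "[p * (- (e * q)) = 1] (mod r)"
    by (simp add: cong_iff_dvd_diff)
  define x :: rat where "x = of_int e * of_int r / of_int q"
  have x_ne: "x \<noteq> 0"
    using q r e by (simp add: x_def)
  have x_inv: "- 1 / x = of_int (- (e * q)) / of_int r"
    using e_cases q r by (auto simp: x_def field_simps)
  have x_abs: "\<bar>of_rat x :: real\<bar> = of_int r / of_int q"
    using e_cases q r by (auto simp: x_def of_rat_divide of_rat_mult)
  have x_real: "(of_rat x :: real) = of_int e * of_int r / of_int q"
    by (simp add: x_def of_rat_divide of_rat_mult)
  have powr_prod: "of_int q powr (-k) * complex_of_real (of_int r / of_int q) powr (-k) = of_int r powr (-k)"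
  proof -
    have "complex_of_real (of_int q) * complex_of_real (of_int r / of_int q) = of_int r"
      using q by simp
    then show ?thesis
      using q r powr_times_real [of "of_int q" "complex_of_real (of_int r / of_int q)" "-k"] by simp
  qed
  have "fstar_frac k f a q - fstar_frac k f p r
          = of_int q powr (-k) * f x - of_int r powr (-k) * f (- 1 / x)"
    unfolding fstar_frac_eq_inverse [where f = f, OF f_per q inv_q] fstar_frac_eq_inverse [where f = f, OF f_per r inv_r] x_inv
    by (simp add: x_def)
  also have "\<dots> = of_int q powr (-k) * h (of_rat x)"
    unfolding h_eq [OF x_ne] x_abs powr_prod [symmetric] by (simp add: algebra_simps)
  finally show ?thesis
    unfolding x_real .
qed

lemma fstar_frac_neighbour_bound:
  assumes q: "0 < q" and r: "0 < r" and det: "\<bar>a * r - p * q\<bar> = 1"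
    and h_le: "\<And>x. \<bar>x\<bar> = of_int r / of_int q \<Longrightarrow> cmod (h x) \<le> B * \<bar>x\<bar> powr (- Re k)"
  shows "cmod (fstar_frac k f a q - fstar_frac k f p r) \<le> B * of_int r powr (- Re k)"
proof -
  define e where "e = a * r - p * q"
  define x :: real where "x = of_int e * of_int r / of_int q"
  have "\<bar>real_of_int e\<bar> = 1"
    unfolding of_int_abs [symmetric] e_def det by simp
  then have x_abs: "\<bar>x\<bar> = of_int r / of_int q"
    using q r by (simp add: x_def abs_mult)
  have "cmod (fstar_frac k f a q - fstar_frac k f p r) = of_int q powr (- Re k) * cmod (h x)"
    using fstar_frac_neighbour_diff [OF q r det [folded e_def] e_def [symmetric]] q
    by (simp add: x_def norm_mult norm_powr_real_powr)
  also have "\<dots> \<le> of_int q powr (- Re k) * (B * (of_int r / of_int q) powr (- Re k))"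
    using h_le [OF x_abs] by (simp add: x_abs mult_left_mono)
  also have "\<dots> = B * of_int r powr (- Re k)"
    using q r by (simp add: powr_divide)
  finally show ?thesis .
qed

lemma fstar_frac_neighbour_le:
  assumes "0 < r" "r \<le> q" "\<bar>a * r - p * q\<bar> = 1"
  shows "cmod (fstar_frac k f a q - fstar_frac k f p r) \<le> C * of_int r powr (- Re k)"
  using assms by (intro fstar_frac_neighbour_bound h_bound) auto

definition mediant_const :: real where
  "mediant_const = C / (1 - 2 powr (- Re k))"

abbreviation farey_error :: "int \<Rightarrow> int \<Rightarrow> real" where
  "farey_error q1 q2 \<equiv> mediant_const * (of_int q1 powr (- Re k) + of_int q2 powr (- Re k))"

lemma mediant_const: "0 \<le> mediant_const" "C \<le> mediant_const"
  "mediant_const * 2 powr (- Re k) + C = mediant_const"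
proof -
  have two: "0 < 1 - 2 powr (- Re k)" "1 - 2 powr (- Re k) \<le> 1"
    using k_pos by (simp_all add: powr_less_one)
  then show "0 \<le> mediant_const"
    using C_nonneg by (simp add: mediant_const_def)
  have "C / 1 \<le> C / (1 - 2 powr (- Re k))"
    using C_nonneg two by (intro divide_left_mono) auto
  then show "C \<le> mediant_const"
    by (simp add: mediant_const_def)
  show "mediant_const * 2 powr (- Re k) + C = mediant_const"
  proof -
    have "1 - 2 powr (- Re k) \<noteq> 0"
      using two by linarith
    then show ?thesis
      by (simp add: mediant_const_def field_simps)
  qed
qed

text \<open>Passing to a child pair costs one neighbour bound \<open>C q1^(-\<sigma>)\<close>, while the term of the
  smaller denominator shrinks by the factor \<open>2^(-\<sigma>)\<close>; the geometric series so obtained is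
  the reason for the choice \<open>mediant_const = C / (1 - 2^(-\<sigma>))\<close>.\<close>
lemma farey_error_child:
  assumes pair: "farey_pair p1 q1 p2 q2" and i: "0 \<le> i"
  shows "farey_error (i * q1 + q2) ((i + 1) * q1 + q2) + C * of_int q1 powr (- Re k) \<le> farey_error q1 q2"
proof -
  define b1 b2 where "b1 = i * q1 + q2" and "b2 = (i + 1) * q1 + q2"
  have q: "1 \<le> q1" "q1 \<le> q2"
    using pair by (auto simp: farey_pair_def)
  have b1: "q2 \<le> b1"
    using farey_pair_child(2) [OF pair i] by (simp add: b1_def)
  then have "2 * q1 \<le> b2"
    using q by (simp add: b1_def b2_def algebra_simps)
  then have "of_int b2 powr (- Re k) \<le> 2 powr (- Re k) * of_int q1 powr (- Re k)"
    using powr_mono2' [of "- Re k" "2 * of_int q1" "of_int b2"] q k_pos by (simp add: powr_mult)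
  moreover have "of_int b1 powr (- Re k) \<le> of_int q2 powr (- Re k)"
    using b1 q k_pos by (intro powr_mono2') auto
  ultimately have "farey_error b1 b2
      \<le> mediant_const * (of_int q2 powr (- Re k) + 2 powr (- Re k) * of_int q1 powr (- Re k))"
    using mediant_const(1) by (intro mult_left_mono add_mono) auto
  then have "farey_error b1 b2 + C * of_int q1 powr (- Re k)
      \<le> mediant_const * of_int q2 powr (- Re k) + (mediant_const * 2 powr (- Re k) + C) * of_int q1 powr (- Re k)"
    by (simp add: algebra_simps)
  also have "\<dots> = farey_error q1 q2"
    unfolding mediant_const(3) by (simp add: algebra_simps)
  finally show ?thesis
    unfolding b1_def b2_def .
qed

lemma mediant_bound:
  assumes "farey_pair p1 q1 p2 q2" "0 \<le> m" "0 \<le> n" "0 < m + n"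
  shows "cmod (fstar_frac k f (m * p1 + n * p2) (m * q1 + n * q2) - fstar_frac k f p1 q1)
           \<le> farey_error q1 q2"
  using assms
proof (induction "nat (m + n)" arbitrary: m n p1 q1 p2 q2 rule: less_induct)
  case less
  have q: "1 \<le> q1" "q1 \<le> q2" "\<bar>p1 * q2 - p2 * q1\<bar> = 1"
    using less.prems(1) by (auto simp: farey_pair_def)
  consider "n = 0" | "m = 0" "0 < n" | "0 < m" "0 < n"
    using less.prems by linarith
  then show ?case
  proof cases
    case 1
    then show ?thesis
      using less.prems mediant_const(1) by (simp add: fstar_frac_scale)
  next
    case 2
    have "cmod (fstar_frac k f p2 q2 - fstar_frac k f p1 q1) \<le> C * of_int q1 powr (- Re k)"
      using q by (intro fstar_frac_neighbour_le) (auto simp: abs_minus_commute)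
    also have "\<dots> \<le> mediant_const * of_int q1 powr (- Re k)"
      using mediant_const(2) by (intro mult_right_mono) auto
    also have "\<dots> \<le> farey_error q1 q2"
      using mediant_const(1) by (intro mult_left_mono) auto
    finally show ?thesis
      using 2 by (simp add: fstar_frac_scale)
  next
    case 3
    obtain i n' m' where i: "0 \<le> i" "0 < n'" "0 \<le> m'" "n' + m' = n"
      and weights: "\<And>x y. m * x + n * y = n' * (i * x + y) + m' * ((i + 1) * x + y)"
      by (rule mediant_weights_split [of m n]) (use 3 in auto)
    define a1 b1 a2 b2 where "a1 = i * p1 + p2" and "b1 = i * q1 + q2"
      and "a2 = (i + 1) * p1 + p2" and "b2 = (i + 1) * q1 + q2"
    have child: "farey_pair a1 b1 a2 b2" "q2 \<le> b1"
      using farey_pair_child [OF less.prems(1) i(1)] by (simp_all add: a1_def b1_def a2_def b2_def)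
    have IH: "cmod (fstar_frac k f (n' * a1 + m' * a2) (n' * b1 + m' * b2) - fstar_frac k f a1 b1)
                \<le> farey_error b1 b2"
      by (rule less.hyps) (use 3 i child(1) in auto)
    have step: "cmod (fstar_frac k f a1 b1 - fstar_frac k f p1 q1) \<le> C * of_int q1 powr (- Re k)"
    proof (rule fstar_frac_neighbour_le)
      have "a1 * q1 - p1 * b1 = - (p1 * q2 - p2 * q1)"
        by (simp add: a1_def b1_def algebra_simps)
      then show "\<bar>a1 * q1 - p1 * b1\<bar> = 1"
        using q by simp
    qed (use q child in auto)
    have "cmod (fstar_frac k f (m * p1 + n * p2) (m * q1 + n * q2) - fstar_frac k f p1 q1)
        \<le> farey_error b1 b2 + C * of_int q1 powr (- Re k)"
      unfolding weights a1_def [symmetric] b1_def [symmetric] a2_def [symmetric] b2_def [symmetric]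
      by (rule norm_diff_triangle_le [OF IH step])
    also have "\<dots> \<le> farey_error q1 q2"
      using farey_error_child [OF less.prems(1) i(1)] by (simp add: b1_def b2_def)
    finally show ?thesis .
  qed
qed

end

section \<open>Farey intervals and continuity at irrationals\<close>

text \<open>With positive denominators, \<open>frac_between p1 q1 p2 q2 z\<close> says that \<open>z\<close> lies in the
  closed interval with endpoints \<open>p1/q1\<close> and \<open>p2/q2\<close>, in either order; denominators are
  cleared so that the condition is polynomial in \<open>z\<close>.\<close>
definition frac_between :: "int \<Rightarrow> int \<Rightarrow> int \<Rightarrow> int \<Rightarrow> real \<Rightarrow> bool" where
  "frac_between p1 q1 p2 q2 z \<longleftrightarrow> 0 \<le> (z * q1 - p1) * (p2 - z * q2)"

definition frac_strictly_between :: "int \<Rightarrow> int \<Rightarrow> int \<Rightarrow> int \<Rightarrow> real \<Rightarrow> bool" where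
  "frac_strictly_between p1 q1 p2 q2 z \<longleftrightarrow> 0 < (z * q1 - p1) * (p2 - z * q2)"

lemma frac_strictly_between_imp_between:
  "frac_strictly_between p1 q1 p2 q2 z \<Longrightarrow> frac_between p1 q1 p2 q2 z"
  by (simp add: frac_between_def frac_strictly_between_def)

lemma open_frac_strictly_between: "open {z. frac_strictly_between p1 q1 p2 q2 z}"
  unfolding frac_strictly_between_def by (intro open_Collect_less continuous_intros)

lemma frac_between_iff:
  assumes "0 < q1" "0 < q2"
  shows "frac_between p1 q1 p2 q2 z \<longleftrightarrow> 0 \<le> (z - p1 / q1) * (p2 / q2 - z)"
    and "frac_strictly_between p1 q1 p2 q2 z \<longleftrightarrow> 0 < (z - p1 / q1) * (p2 / q2 - z)"
proof -
  define c X where "c = real_of_int q1 * real_of_int q2" and "X = (z - p1 / q1) * (p2 / q2 - z)"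
  have eq: "(z * q1 - p1) * (p2 - z * q2) = c * X"
    using assms by (simp add: c_def X_def field_simps)
  have "0 < c"
    using assms by (simp add: c_def)
  then show "frac_between p1 q1 p2 q2 z \<longleftrightarrow> 0 \<le> (z - p1 / q1) * (p2 / q2 - z)"
    and "frac_strictly_between p1 q1 p2 q2 z \<longleftrightarrow> 0 < (z - p1 / q1) * (p2 / q2 - z)"
    unfolding frac_between_def frac_strictly_between_def eq X_def [symmetric]
    by (simp_all add: zero_le_mult_iff zero_less_mult_iff)
qed

lemma frac_between_irrational_imp_strictly:
  assumes "farey_pair p1 q1 p2 q2" "frac_between p1 q1 p2 q2 z" "z \<notin> \<rat>"
  shows "frac_strictly_between p1 q1 p2 q2 z"
proof -
  have q: "0 < q1" "0 < q2"
    using assms(1) by (auto simp: farey_pair_def)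
  have "z \<noteq> p1 / q1" "z \<noteq> p2 / q2"
    using assms(3) by auto
  then show ?thesis
    using assms(2) q unfolding frac_between_iff [OF q] by (simp add: less_le)
qed

lemma farey_child_around_irrational:
  assumes pair: "farey_pair p1 q1 p2 q2" and x: "x \<notin> \<rat>"
    and between: "frac_strictly_between p1 q1 p2 q2 x"
  obtains i where "0 \<le> i"
    "frac_strictly_between (i * p1 + p2) (i * q1 + q2) ((i + 1) * p1 + p2) ((i + 1) * q1 + q2) x"
proof -
  define A B where "A = x * q1 - p1" and "B = p2 - x * q2"
  have AB: "0 < A * B"
    using between by (simp add: frac_strictly_between_def A_def B_def)
  then have "A \<noteq> 0"
    by auto
  define t where "t = B / A"
  have "0 < t"
    using AB by (auto simp: t_def zero_less_divide_iff zero_less_mult_iff)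
  define i where "i = \<lfloor>t\<rfloor>"
  have "0 \<le> i"
    using \<open>0 < t\<close> by (simp add: i_def)
  have "t \<noteq> of_int i"
  proof
    assume "t = of_int i"
    then have "x * (i * q1 + q2) = i * p1 + p2"
      using \<open>A \<noteq> 0\<close> by (simp add: t_def A_def B_def field_simps)
    moreover have "0 < real_of_int (i * q1 + q2)"
      using pair \<open>0 \<le> i\<close> by (simp add: farey_pair_def add_nonneg_pos)
    ultimately have "x = of_int (i * p1 + p2) / of_int (i * q1 + q2)"
      by (simp add: field_simps)
    with x show False
      by simp
  qed
  moreover have "of_int i \<le> t" "t < of_int i + 1"
    using floor_correct [of t] unfolding i_def by linarith+
  ultimately have "of_int i < t" "t < of_int i + 1"
    by linarith+
  then have "0 < (t - i) * (i + 1 - t)"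
    by simp
  moreover have "0 < A * A"
    using \<open>A \<noteq> 0\<close> by (auto simp: zero_less_mult_iff linorder_neq_iff)
  ultimately have "0 < (A * A) * ((t - i) * (i + 1 - t))"
    by simp
  also have "(A * A) * ((t - i) * (i + 1 - t)) = (t * A - i * A) * ((i + 1) * A - t * A)"
    by (simp add: algebra_simps)
  also have "t * A = B"
    using \<open>A \<noteq> 0\<close> by (simp add: t_def)
  also have "(B - i * A) * ((i + 1) * A - B)
      = (x * (i * q1 + q2) - (i * p1 + p2)) * (((i + 1) * p1 + p2) - x * ((i + 1) * q1 + q2))"
    by (simp add: A_def B_def algebra_simps)
  finally show ?thesis
    using that \<open>0 \<le> i\<close> by (simp add: frac_strictly_between_def)
qed

lemma farey_pair_around_irrational:
  assumes x: "x \<notin> \<rat>"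
  shows "\<exists>p1 q1 p2 q2. farey_pair p1 q1 p2 q2 \<and> frac_strictly_between p1 q1 p2 q2 x \<and> int N \<le> q1"
proof (induction N)
  case 0
  have "of_int \<lfloor>x\<rfloor> < x" "x < of_int \<lfloor>x\<rfloor> + 1"
    using x floor_correct [of x] by (auto simp: order.order_iff_strict)
  then have "frac_strictly_between \<lfloor>x\<rfloor> 1 (\<lfloor>x\<rfloor> + 1) 1 x"
    by (simp add: frac_strictly_between_def)
  moreover have "farey_pair \<lfloor>x\<rfloor> 1 (\<lfloor>x\<rfloor> + 1) 1"
    by (simp add: farey_pair_def)
  ultimately show ?case
    by force
next
  case (Suc N)
  \<comment> \<open>Two descents: a child's smaller denominator is only known to be at least the
    parent's larger one, which may equal the smaller one.\<close>
  then obtain p1 q1 p2 q2 where pair: "farey_pair p1 q1 p2 q2"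
    and between: "frac_strictly_between p1 q1 p2 q2 x" and N: "int N \<le> q1"
    by blast
  obtain i where i: "0 \<le> i"
    and between1: "frac_strictly_between (i * p1 + p2) (i * q1 + q2) ((i + 1) * p1 + p2) ((i + 1) * q1 + q2) x"
    using farey_child_around_irrational [OF pair x between] .
  define a1 b1 a2 b2 where "a1 = i * p1 + p2" and "b1 = i * q1 + q2"
    and "a2 = (i + 1) * p1 + p2" and "b2 = (i + 1) * q1 + q2"
  have pair1: "farey_pair a1 b1 a2 b2" and between1': "frac_strictly_between a1 b1 a2 b2 x"
    using farey_pair_child [OF pair i] between1 by (simp_all add: a1_def b1_def a2_def b2_def)
  have "int N + 1 \<le> b2"
    using farey_pair_child(2) [OF pair i] pair N by (simp add: b2_def farey_pair_def algebra_simps)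
  obtain j where j: "0 \<le> j"
    and between2: "frac_strictly_between (j * a1 + a2) (j * b1 + b2) ((j + 1) * a1 + a2) ((j + 1) * b1 + b2) x"
    using farey_child_around_irrational [OF pair1 x between1'] .
  have "farey_pair (j * a1 + a2) (j * b1 + b2) ((j + 1) * a1 + a2) ((j + 1) * b1 + b2)"
    "b2 \<le> j * b1 + b2"
    using farey_pair_child [OF pair1 j] by simp_all
  moreover have "int (Suc N) \<le> j * b1 + b2"
    using \<open>int N + 1 \<le> b2\<close> calculation(2) by simp
  ultimately show ?case
    using between2 by blast
qed

lemma mediant_of_frac_between:
  assumes pair: "farey_pair p1 q1 p2 q2" and q: "0 < q"
    and between: "frac_between p1 q1 p2 q2 (of_int a / of_int q)"
  obtains m n where "0 \<le> m" "0 \<le> n" "a = m * p1 + n * p2" "q = m * q1 + n * q2"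
proof -
  have q12: "0 < q1" "0 < q2" "\<bar>p1 * q2 - p2 * q1\<bar> = 1"
    using pair by (auto simp: farey_pair_def)
  define e where "e = p2 * q1 - p1 * q2"
  have "\<bar>e\<bar> = 1"
    using q12(3) by (simp add: e_def abs_minus_commute)
  then have ee: "e * e = 1"
    by (cases "e \<ge> 0") auto
  define u v where "u = a * q1 - p1 * q" and "v = p2 * q - a * q2"
  have "(of_int a / of_int q * q1 - p1) * (p2 - of_int a / of_int q * q2) = real_of_int (u * v) / (q * q)"
    using q by (simp add: u_def v_def field_simps)
  with between have "0 \<le> real_of_int (u * v) / (q * q)"
    by (simp only: frac_between_def)
  then have uv: "0 \<le> u * v"
    using mult_pos_pos [OF q q] by (auto simp: zero_le_divide_iff simp del: of_int_mult)
  define m n where "m = e * v" and "n = e * u"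
  have "m * p1 + n * p2 = (e * e) * a" "m * q1 + n * q2 = (e * e) * q"
    by (simp_all add: m_def n_def u_def v_def e_def algebra_simps)
  then have a: "a = m * p1 + n * p2" and q_eq: "q = m * q1 + n * q2"
    using ee by simp_all
  have "m * n = (e * e) * (u * v)"
    by (simp add: m_def n_def algebra_simps)
  then have "0 \<le> m * n"
    using uv ee by simp
  moreover have "\<not> (m \<le> 0 \<and> n \<le> 0)"
  proof
    assume "m \<le> 0 \<and> n \<le> 0"
    then have "m * q1 + n * q2 \<le> 0"
      using q12 by (simp add: add_nonpos_nonpos mult_nonpos_nonneg)
    with q q_eq show False
      by simp
  qed
  ultimately have "0 \<le> m" "0 \<le> n"
    by (auto simp: zero_le_mult_iff)
  with a q_eq that show ?thesis
    by blast
qed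

lemma eventually_frac_strictly_between:
  assumes "frac_strictly_between p1 q1 p2 q2 x"
  shows "eventually (\<lambda>y. y \<in> S \<and> frac_strictly_between p1 q1 p2 q2 y) (at x within S)"
  unfolding eventually_at_filter
  by (rule eventually_mono [OF eventually_nhds_in_open [OF open_frac_strictly_between]]) (use assms in auto)

lemma islimpt_Rats_real: "(x::real) islimpt \<rat>"
  using limpt_of_closure [of x \<rat>] by (simp add: Rats_closure_real)

lemma at_within_Rats_nontrivial: "at (x::real) within \<rat> \<noteq> bot"
  using islimpt_Rats_real trivial_limit_within by blast

context quantum_modular
begin

lemma fstar_rat_farey_bound:
  assumes pair: "farey_pair p1 q1 p2 q2" and y: "y \<in> \<rat>" and between: "frac_between p1 q1 p2 q2 y"
  shows "cmod (fstar_rat k f y - fstar_frac k f p1 q1) \<le> farey_error q1 q2"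
proof -
  obtain a q where q: "0 < q" and y_eq: "y = of_int a / of_int q"
    using y by (elim Rats_cases') auto
  obtain m n where mn: "0 \<le> m" "0 \<le> n" "a = m * p1 + n * p2" "q = m * q1 + n * q2"
    using mediant_of_frac_between [OF pair q] between unfolding y_eq .
  have "0 < m + n"
  proof (rule ccontr)
    assume "\<not> 0 < m + n"
    then have "m = 0" "n = 0"
      using mn(1,2) by auto
    with mn(4) q show False
      by simp
  qed
  with mn mediant_bound [OF pair] show ?thesis
    by (simp add: y_eq fstar_frac_def)
qed

lemma farey_error_small:
  assumes x: "x \<notin> \<rat>" and e: "0 < e"
  obtains p1 q1 p2 q2 where "farey_pair p1 q1 p2 q2" "frac_strictly_between p1 q1 p2 q2 x"
    "farey_error q1 q2 < e"
proof -
  note K = mediant_const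
  have "((\<lambda>N. real N powr (- Re k)) \<longlongrightarrow> 0) sequentially"
    using k_pos by (intro tendsto_neg_powr filterlim_real_sequentially) auto
  then have "eventually (\<lambda>N. real N powr (- Re k) < e / (2 * mediant_const + 1)) sequentially"
    using e K(1) by (intro order_tendstoD(2)) auto
  then obtain N0 where N0: "\<And>N. N0 \<le> N \<Longrightarrow> real N powr (- Re k) < e / (2 * mediant_const + 1)"
    unfolding eventually_sequentially by blast
  define N where "N = max N0 1"
  obtain p1 q1 p2 q2 where pair: "farey_pair p1 q1 p2 q2"
    and between: "frac_strictly_between p1 q1 p2 q2 x" and q1: "int N \<le> q1"
    using farey_pair_around_irrational [OF x] by blast
  have q: "1 \<le> q1" "q1 \<le> q2"
    using pair by (auto simp: farey_pair_def)
  have "of_int q1 powr (- Re k) \<le> real N powr (- Re k)" "of_int q2 powr (- Re k) \<le> real N powr (- Re k)"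
    using q1 q k_pos by (auto intro!: powr_mono2' simp: N_def)
  then have "farey_error q1 q2 \<le> mediant_const * (2 * real N powr (- Re k))"
    using K(1) by (intro mult_left_mono) auto
  also have "\<dots> \<le> (2 * mediant_const + 1) * real N powr (- Re k)"
    by (simp add: algebra_simps)
  also have "\<dots> < e"
    using N0 [of N] K(1) by (simp add: N_def field_simps)
  finally show ?thesis
    using that pair between by blast
qed

lemma fstar_rat_converges:
  assumes x: "x \<notin> \<rat>"
  shows "\<exists>L. (fstar_rat k f \<longlongrightarrow> L) (at x within \<rat>)"
proof -
  let ?F = "at x within \<rat>"
  have "cauchy_filter (filtermap (fstar_rat k f) ?F)"
    unfolding cauchy_filter_metric_filtermap
  proof (intro allI impI)
    fix e :: real
    assume "0 < e"
    obtain p1 q1 p2 q2 where pair: "farey_pair p1 q1 p2 q2"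
      and between: "frac_strictly_between p1 q1 p2 q2 x" and small: "farey_error q1 q2 < e / 2"
      using farey_error_small [OF x half_gt_zero [OF \<open>0 < e\<close>]] .
    let ?P = "\<lambda>y. y \<in> \<rat> \<and> frac_strictly_between p1 q1 p2 q2 y"
    have "dist (fstar_rat k f y) (fstar_rat k f z) < e" if "?P y" "?P z" for y z
    proof -
      have "cmod (fstar_rat k f y - fstar_frac k f p1 q1) \<le> farey_error q1 q2"
        "cmod (fstar_rat k f z - fstar_frac k f p1 q1) \<le> farey_error q1 q2"
        using that by (auto intro!: fstar_rat_farey_bound [OF pair] frac_strictly_between_imp_between)
      then show ?thesis
        using small norm_triangle_ineq4 [of "fstar_rat k f y - fstar_frac k f p1 q1"
            "fstar_rat k f z - fstar_frac k f p1 q1"]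
        by (simp add: dist_norm)
    qed
    with eventually_frac_strictly_between [OF between]
    show "\<exists>P. eventually P ?F \<and> (\<forall>y z. P y \<and> P z \<longrightarrow> dist (fstar_rat k f y) (fstar_rat k f z) < e)"
      by blast
  qed
  moreover have "filtermap (fstar_rat k f) ?F \<noteq> bot"
    using at_within_Rats_nontrivial by (simp add: filtermap_bot_iff)
  ultimately obtain L where "filtermap (fstar_rat k f) ?F \<le> nhds L"
    using cauchy_filter_complete_converges [OF _ complete_UNIV] by fastforce
  then show ?thesis
    unfolding filterlim_def by blast
qed

lemma fstar_rat_tendsto_fstar:
  assumes x: "x \<notin> \<rat>"
  shows "(fstar_rat k f \<longlongrightarrow> fstar k f x) (at x within \<rat>)"
proof -
  obtain L where L: "(fstar_rat k f \<longlongrightarrow> L) (at x within \<rat>)"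
    using fstar_rat_converges [OF x] by blast
  moreover have "fstar k f x = L"
    using x tendsto_Lim [OF at_within_Rats_nontrivial L] by (simp add: fstar_def)
  ultimately show ?thesis
    by simp
qed

text \<open>Bounds on the rational points of a Farey interval pass to \<open>f*\<close> on the whole
  interval: its irrational points are interior and \<open>f*\<close> is a limit along rationals there.\<close>
lemma fstar_bound_from_rationals:
  assumes pair: "farey_pair p1 q1 p2 q2" and z: "frac_between p1 q1 p2 q2 z"
    and bound: "\<And>y. y \<in> \<rat> \<Longrightarrow> frac_between p1 q1 p2 q2 y \<Longrightarrow> cmod (fstar_rat k f y - c) \<le> B"
  shows "cmod (fstar k f z - c) \<le> B"
proof (cases "z \<in> \<rat>")
  case True
  then show ?thesis
    using bound z by (simp add: fstar_def)
next
  case False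
  have "eventually (\<lambda>y. cmod (fstar_rat k f y - c) \<le> B) (at z within \<rat>)"
    using eventually_frac_strictly_between [OF frac_between_irrational_imp_strictly [OF pair z False]]
    by (rule eventually_mono) (use bound frac_strictly_between_imp_between in blast)
  moreover have "((\<lambda>y. fstar_rat k f y - c) \<longlongrightarrow> fstar k f z - c) (at z within \<rat>)"
    using fstar_rat_tendsto_fstar [OF False] by (intro tendsto_diff tendsto_const)
  ultimately show ?thesis
    using Lim_norm_ubound [OF at_within_Rats_nontrivial] by blast
qed

lemma fstar_farey_oscillation:
  assumes pair: "farey_pair p1 q1 p2 q2"
    and "frac_between p1 q1 p2 q2 y" "frac_between p1 q1 p2 q2 z"
  shows "cmod (fstar k f y - fstar k f z) \<le> 2 * farey_error q1 q2"
proof -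
  have "cmod (fstar k f w - fstar_frac k f p1 q1) \<le> farey_error q1 q2"
    if "frac_between p1 q1 p2 q2 w" for w
    using pair that by (rule fstar_bound_from_rationals) (rule fstar_rat_farey_bound [OF pair])
  from this [OF assms(2)] this [OF assms(3)] show ?thesis
    using norm_triangle_ineq4 [of "fstar k f y - fstar_frac k f p1 q1" "fstar k f z - fstar_frac k f p1 q1"]
    by simp
qed

lemma isCont_fstar_irrational:
  assumes x: "x \<notin> \<rat>"
  shows "isCont (fstar k f) x"
  unfolding isCont_def tendsto_iff
proof (intro allI impI)
  fix e :: real
  assume "0 < e"
  obtain p1 q1 p2 q2 where pair: "farey_pair p1 q1 p2 q2"
    and between: "frac_strictly_between p1 q1 p2 q2 x" and small: "farey_error q1 q2 < e / 2"
    using farey_error_small [OF x half_gt_zero [OF \<open>0 < e\<close>]] .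
  show "eventually (\<lambda>y. dist (fstar k f y) (fstar k f x) < e) (at x)"
    using eventually_frac_strictly_between [OF between, of UNIV]
  proof (rule eventually_mono)
    fix y
    assume "y \<in> UNIV \<and> frac_strictly_between p1 q1 p2 q2 y"
    then show "dist (fstar k f y) (fstar k f x) < e"
      using fstar_farey_oscillation [OF pair, of y x] between small
      by (simp add: dist_norm frac_strictly_between_imp_between)
  qed
qed

end

section \<open>Continuity at rationals\<close>

lemma farey_neighbour_exists:
  fixes a0 q0 e :: int
  assumes "0 < q0" "coprime a0 q0" "\<bar>e\<bar> = 1"
  obtains p q where "1 \<le> q" "a0 * q - p * q0 = e"
proof -
  obtain u v where uv: "u * a0 + v * q0 = 1"
    using bezout_int [of a0 q0] assms(2) by auto
  define T where "T = \<bar>u\<bar> + 1"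
  have "T \<le> T * q0"
    using assms(1) by (simp add: T_def)
  moreover have "- \<bar>u\<bar> \<le> e * u"
    using assms(3) by (cases "e \<ge> 0") auto
  ultimately have "1 \<le> e * u + T * q0"
    unfolding T_def by linarith
  moreover have "a0 * (e * u + T * q0) - (T * a0 - e * v) * q0 = e * (u * a0 + v * q0)"
    by (simp add: algebra_simps)
  ultimately show ?thesis
    using that uv by simp
qed

text \<open>The sign of the determinant \<open>e\<close> decides on which side of \<open>a0/q0\<close> the neighbour
  \<open>P/Q\<close> lies.\<close>
lemma frac_between_farey_neighbour:
  assumes q0: "0 < q0" and Q: "0 < Q" and e: "\<bar>e\<bar> = 1" and det: "a0 * Q - P * q0 = e"
    and side: "0 \<le> e * (a0 / q0 - y)" and close: "\<bar>y - a0 / q0\<bar> \<le> 1 / (q0 * Q)"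
  shows "frac_between a0 q0 P Q y"
proof -
  define d c where "d = a0 / q0 - y" and "c = 1 / (real_of_int q0 * Q)"
  have P: "real_of_int P / Q = a0 / q0 - e * c"
    using q0 Q arg_cong [OF det, of real_of_int] by (simp add: c_def field_simps)
  have "(y - a0 / q0) * (P / Q - y) = d * (e * c - d)"
    unfolding P by (simp add: d_def algebra_simps)
  moreover have "0 \<le> d * (e * c - d)"
  proof (cases "e = 1")
    case True
    then show ?thesis
      using side close by (simp add: d_def c_def)
  next
    case False
    then have "e = -1"
      using e by auto
    then show ?thesis
      using side close by (simp add: d_def c_def mult_nonpos_nonpos)
  qed
  ultimately show ?thesis
    using q0 Q by (simp add: frac_between_iff)
qed

context quantum_modular
begin

lemma fstar_frac_neighbour_small:
  assumes small_h: "\<forall>\<epsilon>>0. \<forall>\<^sub>F x in at (0::real). cmod (h x) \<le> \<epsilon> * \<bar>x\<bar> powr (- Re k)"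
    and "0 < \<eta>"
  shows "\<forall>\<^sub>F J in sequentially. \<forall>a q p r. 1 \<le> q \<longrightarrow> int J * q \<le> r \<longrightarrow> \<bar>p * q - a * r\<bar> = 1 \<longrightarrow>
           cmod (fstar_frac k f p r - fstar_frac k f a q) \<le> \<eta>"
proof -
  obtain \<rho> where \<rho>: "0 < \<rho>" "\<And>x. x \<noteq> 0 \<Longrightarrow> \<bar>x\<bar> < \<rho> \<Longrightarrow> cmod (h x) \<le> \<eta> * \<bar>x\<bar> powr (- Re k)"
    using small_h \<open>0 < \<eta>\<close> unfolding eventually_at by (auto simp: dist_real_def)
  show ?thesis
    unfolding eventually_sequentially
  proof (intro exI allI impI)
    fix J :: nat and a q p r :: int
    assume J: "nat \<lceil>1 / \<rho>\<rceil> + 1 \<le> J" and q: "1 \<le> q" and r: "int J * q \<le> r"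
      and det: "\<bar>p * q - a * r\<bar> = 1"
    have "1 / \<rho> < real J"
      using J by linarith
    moreover have J_pos: "0 < real J"
      using J by simp
    ultimately have "1 / real J < \<rho>"
      using \<rho>(1) by (simp add: field_simps)
    have "real J * q \<le> r"
      using r by (metis of_int_le_iff of_int_mult of_int_of_nat_eq)
    moreover have "1 \<le> real J * q"
      using J q mult_mono [of 1 "real J" 1 "real_of_int q"] by simp
    ultimately have r_pos: "0 < r" and "of_int q / of_int r \<le> 1 / real J"
      using J_pos by (simp_all add: field_simps)
    then have "\<bar>x\<bar> = of_int q / of_int r \<Longrightarrow> cmod (h x) \<le> \<eta> * \<bar>x\<bar> powr (- Re k)" for x
      using q \<open>1 / real J < \<rho>\<close> by (intro \<rho>(2)) auto
    then have "cmod (fstar_frac k f p r - fstar_frac k f a q) \<le> \<eta> * of_int q powr (- Re k)"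
      using q r_pos det by (intro fstar_frac_neighbour_bound) auto
    also have "\<dots> \<le> \<eta>"
      using powr_mono2' [of "- Re k" 1 "of_int q"] q k_pos \<open>0 < \<eta>\<close> by (simp add: mult_le_cancel_left1)
    finally show "cmod (fstar_frac k f p r - fstar_frac k f a q) \<le> \<eta>" .
  qed
qed

lemma mediant_near_child:
  assumes pair: "farey_pair p1 q1 p2 q2" and "0 \<le> m" "0 < n"
  obtains i where "0 \<le> i"
    "cmod (fstar_frac k f (m * p1 + n * p2) (m * q1 + n * q2) - fstar_frac k f (i * p1 + p2) (i * q1 + q2))
       \<le> 2 * mediant_const * of_int q2 powr (- Re k)"
proof -
  obtain i n' m' where i: "0 \<le> i" "0 < n'" "0 \<le> m'"
    and weights: "\<And>x y. m * x + n * y = n' * (i * x + y) + m' * ((i + 1) * x + y)"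
    by (rule mediant_weights_split [of m n]) (use assms in auto)
  define a1 b1 a2 b2 where "a1 = i * p1 + p2" and "b1 = i * q1 + q2"
    and "a2 = (i + 1) * p1 + p2" and "b2 = (i + 1) * q1 + q2"
  have child: "farey_pair a1 b1 a2 b2" "q2 \<le> b1"
    using farey_pair_child [OF pair i(1)] by (simp_all add: a1_def b1_def a2_def b2_def)
  have "of_int b1 powr (- Re k) \<le> of_int q2 powr (- Re k)" "of_int b2 powr (- Re k) \<le> of_int q2 powr (- Re k)"
    using child pair k_pos by (auto intro!: powr_mono2' simp: farey_pair_def)
  then have "farey_error b1 b2 \<le> mediant_const * (2 * of_int q2 powr (- Re k))"
    by (intro mult_left_mono [OF _ mediant_const(1)]) simp
  then have "farey_error b1 b2 \<le> 2 * mediant_const * of_int q2 powr (- Re k)"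
    by simp
  moreover have "cmod (fstar_frac k f (n' * a1 + m' * a2) (n' * b1 + m' * b2) - fstar_frac k f a1 b1)
      \<le> farey_error b1 b2"
    using child(1) i by (intro mediant_bound) auto
  ultimately show ?thesis
    using that [OF i(1)] unfolding weights a1_def b1_def a2_def b2_def by simp
qed

text \<open>One-sided continuity at \<open>a0/q0\<close>: by the little-o hypothesis a neighbour of \<open>a0/q0\<close>
  with large denominator has nearly the same value, and every rational between \<open>a0/q0\<close> and
  the \<open>J\<close>-th mediant towards \<open>p/q\<close> is within \<open>O(J^(-\<sigma>))\<close> of such a neighbour.\<close>
lemma fstar_rat_near_endpoint:
  assumes pair: "farey_pair a0 q0 p q"
    and neighbour: "\<And>i. 0 \<le> i \<Longrightarrow> cmod (fstar_frac k f (i * a0 + p) (i * q0 + q) - fstar_frac k f a0 q0) \<le> B"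
    and y: "y \<in> \<rat>" "frac_between a0 q0 p q y"
  shows "cmod (fstar_rat k f y - fstar_frac k f a0 q0) \<le> 2 * mediant_const * of_int q powr (- Re k) + B"
proof -
  obtain a b where b: "0 < b" and y_eq: "y = of_int a / of_int b"
    using y(1) by (elim Rats_cases') auto
  obtain m n where mn: "0 \<le> m" "0 \<le> n" "a = m * a0 + n * p" "b = m * q0 + n * q"
    using mediant_of_frac_between [OF pair b] y(2) unfolding y_eq .
  have y_val: "fstar_rat k f y = fstar_frac k f (m * a0 + n * p) (m * q0 + n * q)"
    by (simp add: y_eq mn fstar_frac_def)
  show ?thesis
  proof (cases "n = 0")
    case True
    with b mn have "m \<noteq> 0"
      by auto
    moreover have "0 \<le> B"
      using neighbour [of 0] norm_ge_zero order_trans by blast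
    ultimately show ?thesis
      using True mediant_const(1) by (simp add: y_val fstar_frac_scale)
  next
    case False
    with mn(2) have "0 < n"
      by simp
    obtain i where "0 \<le> i"
      and near: "cmod (fstar_rat k f y - fstar_frac k f (i * a0 + p) (i * q0 + q))
                   \<le> 2 * mediant_const * of_int q powr (- Re k)"
      using mediant_near_child [OF pair mn(1) \<open>0 < n\<close>] unfolding y_val .
    from norm_diff_triangle_le [OF near neighbour [OF \<open>0 \<le> i\<close>]] show ?thesis .
  qed
qed

lemma fstar_near_rational_side:
  assumes small_h: "\<forall>\<epsilon>>0. \<forall>\<^sub>F x in at (0::real). cmod (h x) \<le> \<epsilon> * \<bar>x\<bar> powr (- Re k)"
    and q0: "1 \<le> q0" and q: "1 \<le> q" and det: "\<bar>a0 * q - p * q0\<bar> = 1" and "0 < \<eta>"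
  shows "\<forall>\<^sub>F J in sequentially. \<forall>y. frac_between a0 q0 (int J * a0 + p) (int J * q0 + q) y \<longrightarrow>
           cmod (fstar k f y - fstar_frac k f a0 q0) \<le> \<eta>"
proof -
  have "((\<lambda>J. 2 * mediant_const * real J powr (- Re k)) \<longlongrightarrow> 2 * mediant_const * 0) sequentially"
    using k_pos by (intro tendsto_mult_left tendsto_neg_powr filterlim_real_sequentially) auto
  then have "\<forall>\<^sub>F J in sequentially. 2 * mediant_const * real J powr (- Re k) < \<eta> / 2"
    using \<open>0 < \<eta>\<close> by (intro order_tendstoD(2)) auto
  moreover have "\<forall>\<^sub>F J in sequentially. \<forall>a q p r. 1 \<le> q \<longrightarrow> int J * q \<le> r \<longrightarrow> \<bar>p * q - a * r\<bar> = 1 \<longrightarrow>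
      cmod (fstar_frac k f p r - fstar_frac k f a q) \<le> \<eta> / 2"
    using small_h \<open>0 < \<eta>\<close> by (intro fstar_frac_neighbour_small) auto
  moreover have "\<forall>\<^sub>F J in sequentially. 1 \<le> J"
    by (rule eventually_ge_at_top)
  ultimately show ?thesis
  proof eventually_elim
    case (elim J)
    define p' q' where "p' = int J * a0 + p" and "q' = int J * q0 + q"
    have "int J * q0 \<le> q'"
      using q by (simp add: q'_def)
    have pair: "farey_pair a0 q0 p' q'"
    proof -
      have "q0 \<le> int J * q0"
        using elim(3) q0 by simp
      then have "q0 \<le> q'"
        using q unfolding q'_def by linarith
      moreover have "a0 * q' - p' * q0 = a0 * q - p * q0"
        by (simp add: p'_def q'_def algebra_simps)
      ultimately show ?thesis
        using q0 det by (simp add: farey_pair_def)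
    qed
    have neighbour: "cmod (fstar_frac k f (i * a0 + p') (i * q0 + q') - fstar_frac k f a0 q0) \<le> \<eta> / 2"
      if "0 \<le> i" for i
    proof -
      have "\<bar>(i * a0 + p') * q0 - a0 * (i * q0 + q')\<bar> = \<bar>a0 * q' - p' * q0\<bar>"
        by (simp add: algebra_simps abs_minus_commute)
      then have "\<bar>(i * a0 + p') * q0 - a0 * (i * q0 + q')\<bar> = 1"
        using pair by (simp add: farey_pair_def)
      moreover have "int J * q0 \<le> i * q0 + q'"
        using \<open>int J * q0 \<le> q'\<close> mult_nonneg_nonneg [OF that, of q0] q0 by linarith
      ultimately show ?thesis
        using elim(2) q0 by blast
    qed
    have "int J \<le> q'"
      using \<open>int J * q0 \<le> q'\<close> q0 mult_left_mono [of 1 q0 "int J"] by simp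
    then have "real J \<le> of_int q'"
      by (metis of_int_le_iff of_int_of_nat_eq)
    then have "of_int q' powr (- Re k) \<le> real J powr (- Re k)"
      using elim(3) k_pos by (intro powr_mono2') auto
    then have "2 * mediant_const * of_int q' powr (- Re k) \<le> 2 * mediant_const * real J powr (- Re k)"
      using mediant_const(1) by (intro mult_left_mono) auto
    with elim(1) have "2 * mediant_const * of_int q' powr (- Re k) + \<eta> / 2 \<le> \<eta>"
      by linarith
    then have "cmod (fstar_rat k f y - fstar_frac k f a0 q0) \<le> \<eta>"
      if "y \<in> \<rat>" "frac_between a0 q0 p' q' y" for y
      using fstar_rat_near_endpoint [OF pair neighbour that] by linarith
    then show ?case
      using fstar_bound_from_rationals [OF pair] by (simp add: p'_def q'_def)
  qed
qed

lemma fstar_near_rational_one_side: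
  fixes a0 q0 e :: int
  assumes small_h: "\<forall>\<epsilon>>0. \<forall>\<^sub>F x in at (0::real). cmod (h x) \<le> \<epsilon> * \<bar>x\<bar> powr (- Re k)"
    and q0: "0 < q0" and cop: "coprime a0 q0" and e: "\<bar>e\<bar> = 1" and "0 < \<eta>"
  shows "\<exists>d>0. \<forall>y. 0 \<le> e * (a0 / q0 - y) \<longrightarrow> \<bar>y - a0 / q0\<bar> < d \<longrightarrow>
           cmod (fstar k f y - fstar_frac k f a0 q0) \<le> \<eta>"
proof -
  obtain p q where q: "1 \<le> q" and det: "a0 * q - p * q0 = e"
    using farey_neighbour_exists [OF q0 cop e] .
  have "\<forall>\<^sub>F J in sequentially. \<forall>y. frac_between a0 q0 (int J * a0 + p) (int J * q0 + q) y \<longrightarrow>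
      cmod (fstar k f y - fstar_frac k f a0 q0) \<le> \<eta>"
    using q0 q det e \<open>0 < \<eta>\<close> by (intro fstar_near_rational_side [OF small_h]) auto
  then obtain J where near: "\<And>y. frac_between a0 q0 (int J * a0 + p) (int J * q0 + q) y \<Longrightarrow>
      cmod (fstar k f y - fstar_frac k f a0 q0) \<le> \<eta>"
    unfolding eventually_sequentially by blast
  define Q where "Q = int J * q0 + q"
  have "0 < Q"
    using q q0 by (simp add: Q_def add_nonneg_pos)
  have det': "a0 * Q - (int J * a0 + p) * q0 = e"
    using det by (simp add: Q_def algebra_simps)
  show ?thesis
  proof (intro exI [of _ "1 / (real_of_int q0 * of_int Q)"] conjI allI impI)
    show "0 < 1 / (real_of_int q0 * of_int Q)"
      using q0 \<open>0 < Q\<close> by simp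
    fix y
    assume "0 \<le> e * (a0 / q0 - y)" "\<bar>y - a0 / q0\<bar> < 1 / (real_of_int q0 * of_int Q)"
    then have "frac_between a0 q0 (int J * a0 + p) Q y"
      by (intro frac_between_farey_neighbour [OF q0 \<open>0 < Q\<close> e det']) auto
    then show "cmod (fstar k f y - fstar_frac k f a0 q0) \<le> \<eta>"
      by (rule near [folded Q_def])
  qed
qed

lemma isCont_fstar_rational:
  assumes small_h: "\<forall>\<epsilon>>0. \<forall>\<^sub>F x in at (0::real). cmod (h x) \<le> \<epsilon> * \<bar>x\<bar> powr (- Re k)"
    and x0: "x0 \<in> \<rat>"
  shows "isCont (fstar k f) x0"
  unfolding isCont_def tendsto_iff
proof (intro allI impI)
  fix \<epsilon> :: real
  assume "0 < \<epsilon>"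
  obtain a0 q0 where q0: "0 < q0" and cop: "coprime a0 q0" and x0_eq: "x0 = of_int a0 / of_int q0"
    using x0 by (elim Rats_cases') auto
  have sides: "\<exists>d>0. \<forall>y. 0 \<le> e * (x0 - y) \<longrightarrow> \<bar>y - x0\<bar> < d \<longrightarrow>
      cmod (fstar k f y - fstar k f x0) \<le> \<epsilon> / 2" if "\<bar>e\<bar> = 1" for e :: int
    using fstar_near_rational_one_side [OF small_h q0 cop that, of "\<epsilon> / 2"] x0 \<open>0 < \<epsilon>\<close>
    by (simp add: x0_eq fstar_def fstar_frac_def)
  obtain dl dr where "0 < dl" "0 < dr"
    and left: "\<And>y. y \<le> x0 \<Longrightarrow> \<bar>y - x0\<bar> < dl \<Longrightarrow> cmod (fstar k f y - fstar k f x0) \<le> \<epsilon> / 2"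
    and right: "\<And>y. x0 \<le> y \<Longrightarrow> \<bar>y - x0\<bar> < dr \<Longrightarrow> cmod (fstar k f y - fstar k f x0) \<le> \<epsilon> / 2"
    using sides [of 1] sides [of "-1"] by auto
  have "dist (fstar k f y) (fstar k f x0) < \<epsilon>" if "dist y x0 < min dl dr" for y
    using left [of y] right [of y] that \<open>0 < \<epsilon>\<close> by (cases "y \<le> x0") (auto simp: dist_norm dist_real_def)
  with \<open>0 < dl\<close> \<open>0 < dr\<close> show "\<forall>\<^sub>F y in at x0. dist (fstar k f y) (fstar k f x0) < \<epsilon>"
    unfolding eventually_at by (metis min_less_iff_conj)
qed

lemma continuous_on_fstar:
  assumes "\<forall>\<epsilon>>0. \<forall>\<^sub>F x in at (0::real). cmod (h x) \<le> \<epsilon> * \<bar>x\<bar> powr (- Re k)"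
  shows "continuous_on UNIV (fstar k f)"
  using isCont_fstar_rational [OF assms] isCont_fstar_irrational
  by (blast intro: continuous_at_imp_continuous_on)

end

section \<open>Hoelder continuity almost everywhere\<close>

text \<open>Balls of radius \<open>(n+1)^(-2-\<tau>)\<close> around the fractions with denominator \<open>n+1\<close> near
  \<open>[l, l+1]\<close>; the denominator is written \<open>Suc n\<close> so that the index starts at \<open>0\<close>.\<close>
definition near_fraction_set :: "real \<Rightarrow> int \<Rightarrow> nat \<Rightarrow> real set" where
  "near_fraction_set \<tau> l n = (\<Union>a\<in>{l * int (Suc n) - 1 .. (l + 1) * int (Suc n) + 1}.
      ball (of_int a / real (Suc n)) (real (Suc n) powr (- (2 + \<tau>))))"

text \<open>A null set by Borel-Cantelli; its complement is the full-measure set of the theorem.\<close>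
definition well_approximable :: "real set" where
  "well_approximable = \<rat> \<union> (\<Union>m::nat. \<Union>l::int. limsup (near_fraction_set (1 / real (Suc m)) l))"

lemma near_fraction_set_measure:
  assumes "0 < \<tau>"
  shows "measure lborel (near_fraction_set \<tau> l n) \<le> 8 * real (Suc n) powr (- (1 + \<tau>))"
proof -
  define q r where "q = real (Suc n)" and "r = q powr (- (2 + \<tau>))"
  define I where "I = {l * int (Suc n) - 1 .. (l + 1) * int (Suc n) + 1}"
  have "measure lborel (near_fraction_set \<tau> l n) \<le> (\<Sum>a\<in>I. measure lborel (ball (of_int a / q) r))"
    unfolding near_fraction_set_def I_def [symmetric] q_def r_def
    by (rule measure_UNION_le) (auto simp: I_def)
  also have "\<dots> = (q + 3) * (2 * r)"
    by (simp add: I_def q_def r_def ball_eq_greaterThanLessThan algebra_simps)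
  also have "\<dots> \<le> (4 * q) * (2 * r)"
    by (intro mult_right_mono) (auto simp: q_def r_def)
  also have "\<dots> = 8 * (q * q powr (- (2 + \<tau>)))"
    by (simp add: r_def)
  also have "\<dots> = 8 * q powr (- (1 + \<tau>))"
    by (simp add: q_def powr_mult_base)
  finally show ?thesis
    by (simp add: q_def)
qed

lemma limsup_near_fraction_set_null:
  assumes "0 < \<tau>"
  shows "limsup (near_fraction_set \<tau> l) \<in> null_sets lborel"
proof (rule borel_cantelli_limsup1)
  have "open (near_fraction_set \<tau> l n)" for n
    unfolding near_fraction_set_def by (intro open_UN ballI open_ball)
  then show "near_fraction_set \<tau> l n \<in> sets lborel" for n
    by simp
  show "emeasure lborel (near_fraction_set \<tau> l n) < \<infinity>" for n
    unfolding near_fraction_set_def by (intro emeasure_bounded_finite bounded_UN) auto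
  have "summable (\<lambda>n. 8 * real (Suc n) powr (- (1 + \<tau>)))"
    using assms by (subst summable_Suc_iff) (simp add: summable_real_powr_iff)
  then show "summable (\<lambda>n. measure lborel (near_fraction_set \<tau> l n))"
    by (rule summable_comparison_test' [where N = 0]) (use near_fraction_set_measure [OF assms] in auto)
qed

lemma well_approximable_null: "well_approximable \<in> null_sets lborel"
  unfolding well_approximable_def
  by (intro null_sets.Un countable_imp_null_set_lborel countable_rat null_sets_UN
      limsup_near_fraction_set_null) simp

lemma diophantine_if_not_well_approximable:
  assumes x: "x \<notin> well_approximable"
  obtains Q0 where "1 \<le> Q0"
    "\<And>q a. Q0 \<le> q \<Longrightarrow> of_int q powr (- (2 + 1 / real (Suc m))) \<le> \<bar>x - of_int a / of_int q\<bar>"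
proof -
  define \<tau> where "\<tau> = 1 / real (Suc m)"
  have "x \<notin> limsup (near_fraction_set \<tau> \<lfloor>x\<rfloor>)"
    using x unfolding well_approximable_def \<tau>_def by blast
  then obtain n0 where n0: "\<And>n. n0 \<le> n \<Longrightarrow> x \<notin> near_fraction_set \<tau> \<lfloor>x\<rfloor> n"
    unfolding limsup_INF_SUP by auto
  have "of_int q powr (- (2 + \<tau>)) \<le> \<bar>x - of_int a / of_int q\<bar>" if q: "int n0 + 1 \<le> q" for q a
  proof (cases "a \<in> {\<lfloor>x\<rfloor> * q - 1 .. (\<lfloor>x\<rfloor> + 1) * q + 1}")
    case True
    define n where "n = nat q - 1"
    have q_eq: "q = int (Suc n)" and "n0 \<le> n"
      using q by (simp_all add: n_def)
    then have "x \<notin> ball (of_int a / of_int q) (of_int q powr (- (2 + \<tau>)))"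
      using n0 [OF \<open>n0 \<le> n\<close>] True unfolding near_fraction_set_def q_eq by auto
    then show ?thesis
      by (simp add: dist_real_def abs_minus_commute)
  next
    case False
    have "of_int q powr (- (2 + \<tau>)) \<le> of_int q powr (- 1)"
      using q by (intro powr_mono) (auto simp: \<tau>_def intro: order.trans [of _ 0])
    then have small: "of_int q powr (- (2 + \<tau>)) \<le> 1 / of_int q"
      using q by (simp add: powr_minus divide_inverse)
    from False have "a + 2 \<le> \<lfloor>x\<rfloor> * q \<or> (\<lfloor>x\<rfloor> + 1) * q + 2 \<le> a"
      by auto
    then have "real_of_int (a + 2) \<le> of_int (\<lfloor>x\<rfloor> * q) \<or> real_of_int ((\<lfloor>x\<rfloor> + 1) * q + 2) \<le> of_int a"
      by (simp only: of_int_le_iff)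
    moreover have "of_int \<lfloor>x\<rfloor> * of_int q \<le> x * of_int q" "x * of_int q \<le> (of_int \<lfloor>x\<rfloor> + 1) * of_int q"
      using q floor_correct [of x] by (auto intro!: mult_right_mono)
    ultimately have "1 \<le> \<bar>x * of_int q - of_int a\<bar>"
      by auto
    moreover have "\<bar>x - of_int a / of_int q\<bar> = \<bar>x * of_int q - of_int a\<bar> / of_int q"
      using q by (simp add: field_simps)
    ultimately have "1 / of_int q \<le> \<bar>x - of_int a / of_int q\<bar>"
      using q by (simp add: divide_right_mono)
    with small show ?thesis
      by linarith
  qed
  with that [of "int n0 + 1"] show ?thesis
    by (simp add: \<tau>_def)
qed

lemma between_dist_le:
  fixes x y P Q :: real
  assumes "0 \<le> (x - P) * (Q - x)" "0 \<le> (y - P) * (Q - y)"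
  shows "\<bar>y - x\<bar> \<le> \<bar>Q - P\<bar>"
  using assms unfolding zero_le_mult_iff by (cases "P \<le> Q") (auto simp: abs_if)

lemma inside_outside_dist:
  fixes x y w1 w2 :: real
  assumes "0 < (x - w1) * (w2 - x)" "(y - w1) * (w2 - y) < 0"
  shows "min \<bar>x - w1\<bar> \<bar>x - w2\<bar> \<le> \<bar>y - x\<bar>"
  using assms unfolding zero_less_mult_iff mult_less_0_iff by (auto simp: abs_if min_def)

lemma inside_dist_le_max:
  fixes x P w1 w2 :: real
  assumes "0 < (x - w1) * (w2 - x)"
  shows "\<bar>x - P\<bar> \<le> max \<bar>w1 - P\<bar> \<bar>w2 - P\<bar>"
  using assms unfolding zero_less_mult_iff by (auto simp: abs_if max_def)

lemma farey_neighbour_dist: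
  assumes "0 < q" "0 < r" "\<bar>a * r - p * q\<bar> = 1"
  shows "\<bar>of_int a / of_int q - of_int p / of_int r\<bar> = 1 / (of_int q * of_int r :: real)"
proof -
  have "of_int a / of_int q - of_int p / of_int r = of_int (a * r - p * q) / (of_int q * of_int r :: real)"
    using assms by (simp add: field_simps)
  moreover have "\<bar>real_of_int (a * r - p * q)\<bar> = 1"
    unfolding of_int_abs [symmetric] assms(3) by simp
  ultimately show ?thesis
    using assms by simp
qed

lemma farey_pair_diameter:
  assumes pair: "farey_pair p1 q1 p2 q2"
    and "frac_between p1 q1 p2 q2 x" "frac_between p1 q1 p2 q2 y"
  shows "\<bar>y - x\<bar> \<le> 1 / (of_int q1 * of_int q2)"
proof -
  have q: "0 < q1" "0 < q2" "\<bar>p2 * q1 - p1 * q2\<bar> = 1"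
    using pair by (auto simp: farey_pair_def abs_minus_commute)
  have "\<bar>y - x\<bar> \<le> \<bar>of_int p2 / of_int q2 - of_int p1 / of_int q1\<bar>"
    using assms(2,3) unfolding frac_between_iff [OF q(1,2)] by (rule between_dist_le)
  also have "\<dots> = 1 / (of_int q2 * of_int q1)"
    using q by (intro farey_neighbour_dist) auto
  finally show ?thesis
    by (simp add: mult.commute)
qed

lemma farey_pair_child_denominators:
  assumes pair: "farey_pair p1 q1 p2 q2" and i: "0 \<le> i"
  shows "q1 * q2 < (i * q1 + q2) * ((i + 1) * q1 + q2)"
proof -
  have q: "1 \<le> q1" "q1 \<le> q2"
    using pair by (auto simp: farey_pair_def)
  have b1: "q2 \<le> i * q1 + q2"
    using farey_pair_child(2) [OF pair i] .
  have b2: "q1 + q2 \<le> (i + 1) * q1 + q2"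
    using b1 by (simp add: algebra_simps)
  have "q1 * q2 < (q1 + q2) * q2"
    using q by (simp add: algebra_simps)
  also have "\<dots> \<le> ((i + 1) * q1 + q2) * (i * q1 + q2)"
    using q b1 b2 by (intro mult_mono) auto
  finally show ?thesis
    by (simp add: mult.commute)
qed

text \<open>Descending from a Farey interval around the irrational \<open>x\<close> that also contains
  \<open>y \<noteq> x\<close>, we reach an interval whose child around \<open>x\<close> no longer contains \<open>y\<close>.  The
  descent stops because the intervals have length \<open>1/(q1 q2)\<close> with \<open>q1 q2\<close> increasing.\<close>
lemma farey_separating_child:
  assumes x: "x \<notin> \<rat>" and "y \<noteq> x" and "farey_pair p1 q1 p2 q2"
    and "frac_strictly_between p1 q1 p2 q2 x" "frac_between p1 q1 p2 q2 y" "Q0 \<le> q1"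
  shows "\<exists>P1 Q1 P2 Q2 i. farey_pair P1 Q1 P2 Q2 \<and> frac_strictly_between P1 Q1 P2 Q2 x
     \<and> frac_between P1 Q1 P2 Q2 y \<and> Q0 \<le> Q1 \<and> 0 \<le> i
     \<and> frac_strictly_between (i * P1 + P2) (i * Q1 + Q2) ((i + 1) * P1 + P2) ((i + 1) * Q1 + Q2) x
     \<and> \<not> frac_between (i * P1 + P2) (i * Q1 + Q2) ((i + 1) * P1 + P2) ((i + 1) * Q1 + Q2) y"
  using assms(3-)
proof (induction "nat (\<lfloor>1 / \<bar>y - x\<bar>\<rfloor> - q1 * q2)" arbitrary: p1 q1 p2 q2 rule: less_induct)
  case less
  note pair = less.prems(1)
  obtain i where i: "0 \<le> i"
    and x_child: "frac_strictly_between (i * p1 + p2) (i * q1 + q2) ((i + 1) * p1 + p2) ((i + 1) * q1 + q2) x"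
    using farey_child_around_irrational [OF pair x less.prems(2)] .
  show ?case
  proof (cases "frac_between (i * p1 + p2) (i * q1 + q2) ((i + 1) * p1 + p2) ((i + 1) * q1 + q2) y")
    case False
    with less.prems i x_child show ?thesis
      by blast
  next
    case True
    define b1 b2 where "b1 = i * q1 + q2" and "b2 = (i + 1) * q1 + q2"
    have q: "1 \<le> q1" "q1 \<le> q2"
      using pair by (auto simp: farey_pair_def)
    have child: "farey_pair (i * p1 + p2) b1 ((i + 1) * p1 + p2) b2" "q2 \<le> b1"
      using farey_pair_child [OF pair i] by (simp_all add: b1_def b2_def)
    have "q1 * q2 < b1 * b2"
      using farey_pair_child_denominators [OF pair i] by (simp add: b1_def b2_def)
    moreover have "b1 * b2 \<le> \<lfloor>1 / \<bar>y - x\<bar>\<rfloor>"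
    proof -
      have "b2 = b1 + q1"
        by (simp add: b1_def b2_def algebra_simps)
      with q child(2) have "0 < b1" "0 < b2"
        by linarith+
      moreover have "\<bar>y - x\<bar> \<le> 1 / (of_int b1 * of_int b2)"
        using farey_pair_diameter [OF child(1)] x_child True
        by (simp add: b1_def b2_def frac_strictly_between_imp_between)
      ultimately have "real_of_int (b1 * b2) \<le> 1 / \<bar>y - x\<bar>"
        using \<open>y \<noteq> x\<close> by (simp add: field_simps)
      then show ?thesis
        by (simp add: le_floor_iff)
    qed
    ultimately have "nat (\<lfloor>1 / \<bar>y - x\<bar>\<rfloor> - b1 * b2) < nat (\<lfloor>1 / \<bar>y - x\<bar>\<rfloor> - q1 * q2)"
      by linarith
    moreover have "Q0 \<le> b1"
      using less.prems(4) q child(2) by simp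
    ultimately show ?thesis
      using less.hyps child(1) x_child True unfolding b1_def b2_def by blast
  qed
qed

lemma child_denominator_bound:
  assumes dio: "of_int Q1 powr (- (2 + \<tau>)) \<le> \<bar>x - of_int P1 / of_int Q1\<bar>"
    and pair: "farey_pair P1 Q1 P2 Q2" and i: "0 \<le> i"
    and x: "frac_strictly_between (i * P1 + P2) (i * Q1 + Q2) ((i + 1) * P1 + P2) ((i + 1) * Q1 + Q2) x"
  shows "of_int (i * Q1 + Q2) \<le> of_int Q1 powr (1 + \<tau>)"
proof -
  define A1 D1 A2 D2 where "A1 = i * P1 + P2" and "D1 = i * Q1 + Q2"
    and "A2 = (i + 1) * P1 + P2" and "D2 = (i + 1) * Q1 + Q2"
  have Q: "1 \<le> Q1" "Q1 \<le> Q2" "\<bar>P1 * Q2 - P2 * Q1\<bar> = 1"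
    using pair by (auto simp: farey_pair_def)
  have D: "Q2 \<le> D1" "D2 = D1 + Q1"
    using farey_pair_child(2) [OF pair i] by (simp_all add: D1_def D2_def algebra_simps)
  have "\<bar>A1 * Q1 - P1 * D1\<bar> = 1" "\<bar>A2 * Q1 - P1 * D2\<bar> = 1"
    using Q by (simp_all add: A1_def D1_def A2_def D2_def algebra_simps abs_minus_commute)
  then have "\<bar>of_int A1 / of_int D1 - of_int P1 / of_int Q1\<bar> = 1 / (of_int D1 * of_int Q1 :: real)"
    "\<bar>of_int A2 / of_int D2 - of_int P1 / of_int Q1\<bar> = 1 / (of_int D2 * of_int Q1 :: real)"
    using Q D by (intro farey_neighbour_dist; simp)+
  moreover have "\<bar>x - of_int P1 / of_int Q1\<bar>
      \<le> max \<bar>of_int A1 / of_int D1 - of_int P1 / of_int Q1\<bar> \<bar>of_int A2 / of_int D2 - of_int P1 / of_int Q1\<bar>"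
  proof (rule inside_dist_le_max)
    have "0 < D1" "0 < D2"
      using Q D by linarith+
    then show "0 < (x - A1 / D1) * (A2 / D2 - x)"
      using x by (simp add: frac_between_iff A1_def D1_def A2_def D2_def)
  qed
  moreover have "1 / (of_int D2 * of_int Q1) \<le> 1 / (of_int D1 * of_int Q1 :: real)"
    using Q D by (intro divide_left_mono mult_right_mono) auto
  ultimately have "of_int Q1 powr (- (2 + \<tau>)) \<le> 1 / (of_int D1 * of_int Q1)"
    using dio by linarith
  then have "of_int D1 * (of_int Q1 * of_int Q1 powr (- (2 + \<tau>))) \<le> 1"
    using Q D by (simp add: field_simps)
  moreover have "of_int Q1 * of_int Q1 powr (- (2 + \<tau>)) = of_int Q1 powr (- (1 + \<tau>))"
    using Q by (simp add: powr_mult_base)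
  moreover have "of_int Q1 powr (- (1 + \<tau>)) = 1 / of_int Q1 powr (1 + \<tau>)"
    by (rule powr_minus_divide)
  ultimately have "of_int D1 / of_int Q1 powr (1 + \<tau>) \<le> 1"
    by simp
  then have "of_int D1 \<le> of_int Q1 powr (1 + \<tau>)"
    using Q by (simp add: divide_le_eq_1)
  then show ?thesis
    by (simp add: D1_def)
qed

lemma diophantine_separation:
  fixes \<tau> :: real
  assumes dio: "\<And>a q. Q0 \<le> q \<Longrightarrow> of_int q powr (- (2 + \<tau>)) \<le> \<bar>x - of_int a / of_int q\<bar>"
    and \<tau>: "0 < \<tau>" and pair: "farey_pair P1 Q1 P2 Q2" and Q0: "Q0 \<le> Q1" and i: "0 \<le> i"
    and x: "frac_strictly_between (i * P1 + P2) (i * Q1 + Q2) ((i + 1) * P1 + P2) ((i + 1) * Q1 + Q2) x"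
    and y: "\<not> frac_between (i * P1 + P2) (i * Q1 + Q2) ((i + 1) * P1 + P2) ((i + 1) * Q1 + Q2) y"
  shows "of_int Q1 powr (- ((1 + \<tau>) * (2 + \<tau>))) \<le> 2 powr (2 + \<tau>) * \<bar>y - x\<bar>"
proof -
  define A1 D1 A2 D2 where "A1 = i * P1 + P2" and "D1 = i * Q1 + Q2"
    and "A2 = (i + 1) * P1 + P2" and "D2 = (i + 1) * Q1 + Q2"
  have Q: "1 \<le> Q1" "Q1 \<le> Q2"
    using pair by (auto simp: farey_pair_def)
  have D: "Q2 \<le> D1" "D2 = D1 + Q1"
    using farey_pair_child(2) [OF pair i] by (simp_all add: D1_def D2_def algebra_simps)
  have "0 < D1" "0 < D2"
    using Q D by linarith+
  then have "min \<bar>x - A1 / D1\<bar> \<bar>x - A2 / D2\<bar> \<le> \<bar>y - x\<bar>"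
    using x y by (intro inside_outside_dist) (auto simp: frac_between_iff A1_def D1_def A2_def D2_def)
  moreover have "of_int D1 powr (- (2 + \<tau>)) \<le> \<bar>x - A1 / D1\<bar>" "of_int D2 powr (- (2 + \<tau>)) \<le> \<bar>x - A2 / D2\<bar>"
    using Q0 Q D by (intro dio; simp)+
  moreover have "of_int D2 powr (- (2 + \<tau>)) \<le> of_int D1 powr (- (2 + \<tau>))"
    using Q D \<tau> by (intro powr_mono2') auto
  ultimately have far: "of_int D2 powr (- (2 + \<tau>)) \<le> \<bar>y - x\<bar>"
    by linarith
  have "of_int D1 \<le> of_int Q1 powr (1 + \<tau>)"
    unfolding D1_def using dio [OF Q0] pair i x by (rule child_denominator_bound)
  then have "of_int D2 \<le> 2 * of_int Q1 powr (1 + \<tau>)"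
    using Q D by simp
  have "2 powr (- (2 + \<tau>)) * of_int Q1 powr (- ((1 + \<tau>) * (2 + \<tau>)))
      = (2 * of_int Q1 powr (1 + \<tau>)) powr (- (2 + \<tau>))"
    by (simp only: powr_mult powr_powr mult_minus_right)
  also have "\<dots> \<le> of_int D2 powr (- (2 + \<tau>))"
    using \<open>of_int D2 \<le> 2 * of_int Q1 powr (1 + \<tau>)\<close> Q D \<tau> by (intro powr_mono2') auto
  also have "\<dots> \<le> \<bar>y - x\<bar>"
    by (rule far)
  finally have lower: "2 powr (- (2 + \<tau>)) * of_int Q1 powr (- ((1 + \<tau>) * (2 + \<tau>))) \<le> \<bar>y - x\<bar>" .
  have "of_int Q1 powr (- ((1 + \<tau>) * (2 + \<tau>)))
      = 2 powr (2 + \<tau>) * (2 powr (- (2 + \<tau>)) * of_int Q1 powr (- ((1 + \<tau>) * (2 + \<tau>))))"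
    by (simp add: mult.assoc [symmetric] powr_add [symmetric])
  also have "\<dots> \<le> 2 powr (2 + \<tau>) * \<bar>y - x\<bar>"
    using lower by (intro mult_left_mono) auto
  finally show ?thesis .
qed

lemma hoelder_order_choice:
  fixes \<alpha> \<sigma> :: real
  assumes "0 < \<alpha>" "\<alpha> < \<sigma> / 2"
  obtains m :: nat where "\<alpha> * ((1 + 1 / real (Suc m)) * (2 + 1 / real (Suc m))) \<le> \<sigma>"
proof
  define c where "c = \<sigma> / \<alpha> - 2"
  define m where "m = nat \<lceil>4 / c\<rceil>"
  define \<tau> where "\<tau> = 1 / real (Suc m)"
  have "0 < c"
    using assms by (simp add: c_def field_simps)
  have "4 / c \<le> real (Suc m)"
    unfolding m_def by linarith
  then have "4 \<le> c * real (Suc m)"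
    using \<open>0 < c\<close> by (simp add: field_simps)
  then have "\<tau> \<le> c / 4"
    by (simp add: \<tau>_def field_simps)
  moreover have "0 < \<tau>" "\<tau> \<le> 1"
    by (simp_all add: \<tau>_def)
  ultimately have "(1 + \<tau>) * (2 + \<tau>) \<le> 2 + c"
    by (simp add: algebra_simps) (smt (verit) mult_left_le)
  then show "\<alpha> * ((1 + 1 / real (Suc m)) * (2 + 1 / real (Suc m))) \<le> \<sigma>"
    unfolding \<tau>_def [symmetric] using assms(1) by (simp add: c_def field_simps)
qed

lemma has_vector_derivative_zero_if_hoelder:
  fixes g :: "real \<Rightarrow> 'a::real_normed_vector"
  assumes "1 < \<alpha>" "0 < \<delta>"
    and hoelder: "\<forall>y. \<bar>y - x\<bar> < \<delta> \<longrightarrow> norm (g y - g x) \<le> C * \<bar>y - x\<bar> powr \<alpha>"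
  shows "(g has_vector_derivative 0) (at x)"
proof -
  have "((\<lambda>y. \<bar>y - x\<bar>) \<longlongrightarrow> \<bar>x - x\<bar>) (at x)"
    by (intro tendsto_intros)
  then have "((\<lambda>y. \<bar>C\<bar> * \<bar>y - x\<bar> powr (\<alpha> - 1)) \<longlongrightarrow> 0) (at x)"
    using assms(1) by (intro tendsto_mult_right_zero tendsto_zero_powrI) auto
  moreover have "\<forall>\<^sub>F y in at x. norm (norm (g y - g x - (y - x) *\<^sub>R 0) / norm (y - x))
      \<le> \<bar>C\<bar> * \<bar>y - x\<bar> powr (\<alpha> - 1)"
    unfolding eventually_at
  proof (intro exI [of _ \<delta>] conjI ballI impI)
    fix y
    assume y: "y \<noteq> x \<and> dist y x < \<delta>"
    then have "norm (g y - g x) \<le> C * \<bar>y - x\<bar> powr \<alpha>"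
      using hoelder by (simp add: dist_real_def)
    also have "\<dots> \<le> \<bar>C\<bar> * \<bar>y - x\<bar> powr \<alpha>"
      by (intro mult_right_mono) auto
    finally have "norm (g y - g x) \<le> \<bar>C\<bar> * \<bar>y - x\<bar> powr \<alpha>" .
    then have "norm (g y - g x) / \<bar>y - x\<bar> \<le> \<bar>C\<bar> * \<bar>y - x\<bar> powr \<alpha> / \<bar>y - x\<bar>"
      by (intro divide_right_mono) auto
    also have "\<dots> = \<bar>C\<bar> * \<bar>y - x\<bar> powr (\<alpha> - 1)"
      using y by (simp add: powr_diff)
    finally show "norm (norm (g y - g x - (y - x) *\<^sub>R 0) / norm (y - x)) \<le> \<bar>C\<bar> * \<bar>y - x\<bar> powr (\<alpha> - 1)"
      by simp
  qed (use assms(2) in simp)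
  ultimately have "((\<lambda>y. norm (g y - g x - (y - x) *\<^sub>R 0) / norm (y - x)) \<longlongrightarrow> 0) (at x)"
    by (rule Lim_null_comparison [rotated])
  then show ?thesis
    unfolding has_vector_derivative_def has_derivative_iff_norm by simp
qed

lemma powr_hoelder_exponent:
  fixes Q S \<sigma> \<alpha> t :: real
  assumes "1 \<le> Q" "0 < \<alpha>" "\<alpha> * S \<le> \<sigma>" "Q powr (- S) \<le> t"
  shows "Q powr (- \<sigma>) \<le> t powr \<alpha>"
proof -
  have "Q powr (- \<sigma>) \<le> Q powr (- (\<alpha> * S))"
    using assms by (intro powr_mono) auto
  also have "\<dots> = (Q powr (- S)) powr \<alpha>"
    by (simp add: powr_powr mult.commute)
  also have "\<dots> \<le> t powr \<alpha>"
    using assms by (intro powr_mono2) auto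
  finally show ?thesis .
qed

context quantum_modular
begin

lemma fstar_hoelder_estimate:
  assumes dio: "\<And>a q. Q0 \<le> q \<Longrightarrow> of_int q powr (- (2 + \<tau>)) \<le> \<bar>x - of_int a / of_int q\<bar>"
    and "0 < \<tau>" "0 < \<alpha>" and order: "\<alpha> * ((1 + \<tau>) * (2 + \<tau>)) \<le> Re k"
    and x: "x \<notin> \<rat>" and pair: "farey_pair p1 q1 p2 q2" and "Q0 \<le> q1"
    and between: "frac_strictly_between p1 q1 p2 q2 x" "frac_between p1 q1 p2 q2 y"
  shows "cmod (fstar k f y - fstar k f x) \<le> 4 * mediant_const * 2 powr ((2 + \<tau>) * \<alpha>) * \<bar>y - x\<bar> powr \<alpha>"
proof (cases "y = x")
  case True
  then show ?thesis
    by simp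
next
  case False
  obtain P1 Q1 P2 Q2 i where pair': "farey_pair P1 Q1 P2 Q2"
    and x': "frac_strictly_between P1 Q1 P2 Q2 x" and y': "frac_between P1 Q1 P2 Q2 y"
    and "Q0 \<le> Q1" "0 \<le> i"
    and x_child: "frac_strictly_between (i * P1 + P2) (i * Q1 + Q2) ((i + 1) * P1 + P2) ((i + 1) * Q1 + Q2) x"
    and y_child: "\<not> frac_between (i * P1 + P2) (i * Q1 + Q2) ((i + 1) * P1 + P2) ((i + 1) * Q1 + Q2) y"
    using farey_separating_child [OF x False pair between \<open>Q0 \<le> q1\<close>] by blast
  have Q: "1 \<le> Q1" "Q1 \<le> Q2"
    using pair' by (auto simp: farey_pair_def)
  have "cmod (fstar k f y - fstar k f x) \<le> 2 * farey_error Q1 Q2"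
    using pair' y' x' by (intro fstar_farey_oscillation) (auto simp: frac_strictly_between_imp_between)
  also have "\<dots> \<le> 4 * mediant_const * of_int Q1 powr (- Re k)"
  proof -
    have "of_int Q2 powr (- Re k) \<le> of_int Q1 powr (- Re k)"
      using Q k_pos by (intro powr_mono2') auto
    then have "farey_error Q1 Q2 \<le> mediant_const * (2 * of_int Q1 powr (- Re k))"
      by (intro mult_left_mono [OF _ mediant_const(1)]) simp
    then show ?thesis
      by simp
  qed
  also have "\<dots> \<le> 4 * mediant_const * (2 powr (2 + \<tau>) * \<bar>y - x\<bar>) powr \<alpha>"
    using diophantine_separation [OF dio \<open>0 < \<tau>\<close> pair' \<open>Q0 \<le> Q1\<close> \<open>0 \<le> i\<close> x_child y_child]
      Q \<open>0 < \<alpha>\<close> order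
    by (intro mult_left_mono powr_hoelder_exponent) (auto simp: mediant_const(1))
  also have "\<dots> = 4 * mediant_const * 2 powr ((2 + \<tau>) * \<alpha>) * \<bar>y - x\<bar> powr \<alpha>"
    by (simp add: powr_mult powr_powr)
  finally show ?thesis .
qed

lemma fstar_hoelder_at:
  assumes x: "x \<notin> well_approximable" and \<alpha>: "0 < \<alpha>" "\<alpha> < Re k / 2"
  shows "\<exists>C \<delta>. \<delta> > 0 \<and> (\<forall>y. \<bar>y - x\<bar> < \<delta> \<longrightarrow> cmod (fstar k f y - fstar k f x) \<le> C * \<bar>y - x\<bar> powr \<alpha>)"
proof -
  obtain m where m: "\<alpha> * ((1 + 1 / real (Suc m)) * (2 + 1 / real (Suc m))) \<le> Re k"
    using hoelder_order_choice [OF \<alpha>] .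
  obtain Q0 where "1 \<le> Q0"
    and dio: "\<And>q a. Q0 \<le> q \<Longrightarrow> of_int q powr (- (2 + 1 / real (Suc m))) \<le> \<bar>x - of_int a / of_int q\<bar>"
    using diophantine_if_not_well_approximable [OF x, of m] by blast
  have x_irr: "x \<notin> \<rat>"
    using x by (simp add: well_approximable_def)
  obtain p1 q1 p2 q2 where pair: "farey_pair p1 q1 p2 q2"
    and between: "frac_strictly_between p1 q1 p2 q2 x" and "int (nat Q0) \<le> q1"
    using farey_pair_around_irrational [OF x_irr] by blast
  with \<open>1 \<le> Q0\<close> have "Q0 \<le> q1"
    by simp
  obtain \<delta> where "0 < \<delta>" and near: "\<And>y. y \<noteq> x \<Longrightarrow> \<bar>y - x\<bar> < \<delta> \<Longrightarrow> frac_between p1 q1 p2 q2 y"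
    using eventually_frac_strictly_between [OF between, of UNIV]
    by (auto simp: eventually_at dist_real_def frac_strictly_between_imp_between)
  have "frac_between p1 q1 p2 q2 y" if "\<bar>y - x\<bar> < \<delta>" for y
    using near [OF _ that] between by (cases "y = x") (auto simp: frac_strictly_between_imp_between)
  then have "cmod (fstar k f y - fstar k f x)
      \<le> 4 * mediant_const * 2 powr ((2 + 1 / real (Suc m)) * \<alpha>) * \<bar>y - x\<bar> powr \<alpha>"
    if "\<bar>y - x\<bar> < \<delta>" for y
    using that by (intro fstar_hoelder_estimate [OF dio _ \<alpha>(1) m x_irr pair \<open>Q0 \<le> q1\<close> between]) auto
  with \<open>0 < \<delta>\<close> show ?thesis
    by blast
qed

lemma fstar_hoelder_off_null_set:
  "\<exists>X. - X \<in> null_sets lborel \<and>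
     (\<forall>x\<in>X. \<forall>\<alpha>::real. 0 < \<alpha> \<and> \<alpha> < Re k / 2 \<longrightarrow>
        (\<exists>C \<delta>. \<delta> > 0 \<and> (\<forall>y. \<bar>y - x\<bar> < \<delta> \<longrightarrow> cmod (fstar k f y - fstar k f x) \<le> C * \<bar>y - x\<bar> powr \<alpha>)))"
  using well_approximable_null fstar_hoelder_at by (intro exI [of _ "- well_approximable"]) auto

lemma AE_fstar_derivative_zero:
  assumes "2 < Re k"
  shows "AE x in lborel. (fstar k f has_vector_derivative 0) (at x)"
proof (rule AE_I' [OF well_approximable_null], rule subsetI, rule ccontr)
  fix x
  assume x: "x \<in> {x \<in> space lborel. \<not> (fstar k f has_vector_derivative 0) (at x)}"
    and "x \<notin> well_approximable"
  define \<alpha> :: real where "\<alpha> = (1 + Re k / 2) / 2"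
  have \<alpha>: "0 < \<alpha>" "\<alpha> < Re k / 2" "1 < \<alpha>"
    using assms by (simp_all add: \<alpha>_def)
  obtain C \<delta> where "0 < \<delta>"
    and "\<forall>y. \<bar>y - x\<bar> < \<delta> \<longrightarrow> cmod (fstar k f y - fstar k f x) \<le> C * \<bar>y - x\<bar> powr \<alpha>"
    using fstar_hoelder_at [OF \<open>x \<notin> well_approximable\<close> \<alpha>(1,2)] by blast
  then have "(fstar k f has_vector_derivative 0) (at x)"
    by (intro has_vector_derivative_zero_if_hoelder [OF \<alpha>(3)])
  with x show False
    by simp
qed

end

theorem theorem1p4:
  fixes k :: complex and f :: "rat \<Rightarrow> complex" and h :: "real \<Rightarrow> complex"
  assumes k_pos: "Re k > 0"
    and f_per: "\<And>x. f (x + 1) = f x"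
    and h_eq: "\<And>x::rat. x \<noteq> 0 \<Longrightarrow>
       h (of_rat x) = f x - (of_real \<bar>of_rat x\<bar> :: complex) powr (-k) * f (- 1 / x)"
    and h_bigO: "\<exists>C. \<forall>x::real. 0 < \<bar>x\<bar> \<and> \<bar>x\<bar> \<le> 1 \<longrightarrow> cmod (h x) \<le> C * \<bar>x\<bar> powr (- Re k)"
  shows
    "(\<forall>x. x \<notin> \<rat> \<longrightarrow> (\<exists>L. (fstar_rat k f \<longlongrightarrow> L) (at x within \<rat>)))
     \<and> (\<forall>x. x \<notin> \<rat> \<longrightarrow> isCont (fstar k f) x)
     \<and> ((\<forall>\<epsilon>>0. \<forall>\<^sub>F x in at (0::real). cmod (h x) \<le> \<epsilon> * \<bar>x\<bar> powr (- Re k))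
          \<longrightarrow> continuous_on UNIV (fstar k f))
     \<and> (\<exists>X. - X \<in> null_sets lborel \<and>
          (\<forall>x\<in>X. \<forall>\<alpha>::real. 0 < \<alpha> \<and> \<alpha> < Re k / 2 \<longrightarrow>
             (\<exists>C \<delta>. \<delta> > 0 \<and> (\<forall>y. \<bar>y - x\<bar> < \<delta> \<longrightarrow>
                cmod (fstar k f y - fstar k f x) \<le> C * \<bar>y - x\<bar> powr \<alpha>))))
     \<and> (Re k > 2 \<longrightarrow> (AE x in lborel. (fstar k f has_vector_derivative 0) (at x)))"
proof -
  obtain C where "\<forall>x::real. 0 < \<bar>x\<bar> \<and> \<bar>x\<bar> \<le> 1 \<longrightarrow> cmod (h x) \<le> C * \<bar>x\<bar> powr (- Re k)"
    using h_bigO by blast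
  then interpret quantum_modular k f h C
    using k_pos f_per h_eq by unfold_locales auto
  show ?thesis
    using fstar_rat_converges isCont_fstar_irrational continuous_on_fstar
      fstar_hoelder_off_null_set AE_fstar_derivative_zero by blast
qed

end
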